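(* Let $\mathbb{L}=(\mathcal{P},\mathcal{C},\parallel)$ be a miquelian Laguerre plane of characteristic $2$. If $K,L,M$ are circles, $p$ is a point with $p\in K$ and $p\in L$, and each of $K$ and $L$ is tangent to $M$, then $K$ and $L$ are tangent at $p$.
   Context: A Laguerre plane is a triple $(\mathcal{P},\mathcal{C},\parallel)$ where $\mathcal{P}$ is a set of points, $\mathcal{C}\subset 2^{\mathcal{P}}$ a set of circles and $\parallel$ an equivalence relation on $\mathcal{P}$ (parallelism; its classes are called generators) such that: (1) any three pairwise non-parallel points lie on a unique circle; (2) for every circle $K$ and non-parallel points $p\in K$, $q\notin K$ there is exactly one circle $L$ with $q\in L$ and $K\cap L=\{p\}$; (3) for every point $p$ and circle $K$ there is exactly one point $q\in K$ with $q\parallel p$; (4) some circle contains at least three but not all points. Circles $K,L$ are tangent at $p$ if $K\cap L=\{p\}$ or $K=L$ (with $p\in K$); $K$ and $L$ are tangent if they are tangent at some point. A quadruple $(a,b,c,d)$ of points is concyclic, written $(a,b,c,d)_{\triangle}$, if $a,b,c,d$ lie on a common circle, or $a\parallel b$, $c\parallel d$ and $a\nparallel c$. The plane is miquelian if it satisfies Miquel's condition: for any eight distinct points $a,b,c,d,e,f,g,h$, the relations $(a,c,b,d)_{\triangle}$, $(a,e,b,h)_{\triangle}$, $(a,g,d,h)_{\triangle}$, $(b,f,c,e)_{\triangle}$, $(c,g,d,f)_{\triangle}$ imply $(e,g,f,h)_{\triangle}$. Miquelian Laguerre planes are exactly the classical ones over commutative fields $F$ (plane sections of a quadratic cone in the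 projective space over $F$); the characteristic of the plane is the characteristic of $F$. *)

theory Defs
  imports Main
begin

definition pairwise_nonpar :: "('p \<Rightarrow> 'p \<Rightarrow> bool) \<Rightarrow> 'p \<Rightarrow> 'p \<Rightarrow> 'p \<Rightarrow> bool" where
  "pairwise_nonpar par a b c \<longleftrightarrow> \<not> par a b \<and> \<not> par a c \<and> \<not> par b c"

definition laguerre_plane :: "'p set \<Rightarrow> 'p set set \<Rightarrow> ('p \<Rightarrow> 'p \<Rightarrow> bool) \<Rightarrow> bool" where
  "laguerre_plane P C par \<longleftrightarrow>
     (\<forall>K\<in>C. K \<subseteq> P) \<and>
     (\<forall>p q. par p q \<longrightarrow> p \<in> P \<and> q \<in> P) \<and>
     (\<forall>p\<in>P. par p p) \<and>
     (\<forall>p q. par p q \<longrightarrow> par q p) \<and>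
     (\<forall>p q r. par p q \<longrightarrow> par q r \<longrightarrow> par p r) \<and>
     (\<forall>a\<in>P. \<forall>b\<in>P. \<forall>c\<in>P. pairwise_nonpar par a b c \<longrightarrow>
        (\<exists>!K. K \<in> C \<and> a \<in> K \<and> b \<in> K \<and> c \<in> K)) \<and>
     (\<forall>K\<in>C. \<forall>p\<in>K. \<forall>q\<in>P. \<not> par p q \<longrightarrow> q \<notin> K \<longrightarrow>
        (\<exists>!L. L \<in> C \<and> q \<in> L \<and> K \<inter> L = {p})) \<and>
     (\<forall>p\<in>P. \<forall>K\<in>C. \<exists>!q. q \<in> K \<and> par q p) \<and>
     (\<exists>K\<in>C. (\<exists>a b c. a \<in> K \<and> b \<in> K \<and> c \<in> K \<and> a \<noteq> b \<and> a \<noteq> c \<and> b \<noteq> c) \<and> K \<noteq> P)"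

definition tangent_at :: "'p set \<Rightarrow> 'p set \<Rightarrow> 'p \<Rightarrow> bool" where
  "tangent_at K L p \<longleftrightarrow> p \<in> K \<and> p \<in> L \<and> (K \<inter> L = {p} \<or> K = L)"

definition tangent :: "'p set \<Rightarrow> 'p set \<Rightarrow> bool" where
  "tangent K L \<longleftrightarrow> (\<exists>p. tangent_at K L p)"

definition concyclic :: "'p set set \<Rightarrow> ('p \<Rightarrow> 'p \<Rightarrow> bool) \<Rightarrow> 'p \<Rightarrow> 'p \<Rightarrow> 'p \<Rightarrow> 'p \<Rightarrow> bool" where
  "concyclic C par a b c d \<longleftrightarrow>
     (\<exists>K\<in>C. a \<in> K \<and> b \<in> K \<and> c \<in> K \<and> d \<in> K) \<or> (par a b \<and> par c d \<and> \<not> par a c)"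

definition miquelian :: "'p set \<Rightarrow> 'p set set \<Rightarrow> ('p \<Rightarrow> 'p \<Rightarrow> bool) \<Rightarrow> bool" where
  "miquelian P C par \<longleftrightarrow>
     (\<forall>a b c d e f g h. {a,b,c,d,e,f,g,h} \<subseteq> P \<longrightarrow> distinct [a,b,c,d,e,f,g,h] \<longrightarrow>
        concyclic C par a c b d \<longrightarrow> concyclic C par a e b h \<longrightarrow> concyclic C par a g d h \<longrightarrow>
        concyclic C par b f c e \<longrightarrow> concyclic C par c g d f \<longrightarrow>
        concyclic C par e g f h)"

text \<open>The classical (miquelian) Laguerre plane over a field F (cylinder model):
  points (F \<union> {\<infinity>}) \<times> F, with None playing the role of \<infinity>;
  circles {(x, a x^2 + b x + c)} \<union> {(\<infinity>, a)}; parallel iff same first coordinate.\<close>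

definition classical_points :: "('f::field option \<times> 'f) set" where
  "classical_points = UNIV"

definition classical_circle :: "'f::field \<Rightarrow> 'f \<Rightarrow> 'f \<Rightarrow> ('f option \<times> 'f) set" where
  "classical_circle a b c = {(Some x, a * x^2 + b * x + c) | x. True} \<union> {(None, a)}"

definition classical_circles :: "('f::field option \<times> 'f) set set" where
  "classical_circles = {classical_circle a b c | a b c. True}"

definition classical_par :: "('f::field option \<times> 'f) \<Rightarrow> ('f option \<times> 'f) \<Rightarrow> bool" where
  "classical_par p q \<longleftrightarrow> fst p = fst q"

definition classical_iso :: "'p set \<Rightarrow> 'p set set \<Rightarrow> ('p \<Rightarrow> 'p \<Rightarrow> bool)
    \<Rightarrow> ('p \<Rightarrow> 'f::field option \<times> 'f) \<Rightarrow> bool" where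
  "classical_iso P C par \<phi> \<longleftrightarrow>
     bij_betw \<phi> P classical_points \<and>
     (\<forall>K. K \<subseteq> P \<longrightarrow> (K \<in> C \<longleftrightarrow> \<phi> ` K \<in> classical_circles)) \<and>
     (\<forall>p\<in>P. \<forall>q\<in>P. par p q \<longleftrightarrow> classical_par (\<phi> p) (\<phi> q))"

end

theory Submission
  imports Defs "HOL-Computational_Algebra.Primes"
begin

text \<open>Through the isomorphism, circles become the parabolas \<open>y = a x\<^sup>2 + b x + c\<close>
  completed by the point \<open>(\<infinity>, a)\<close>, and two of them meet where
  \<open>(a - a') x\<^sup>2 + (b - b') x + (c - c') = 0\<close> (at \<open>\<infinity>\<close> iff \<open>a = a'\<close>). In characteristic 2 the
  roots of \<open>d x\<^sup>2 + e x + f\<close> with \<open>d \<noteq> 0\<close> come in pairs \<open>x, x + e/d\<close>, and \<open>x \<mapsto> x\<^sup>2\<close> is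
  injective. Hence distinct circles with different linear coefficients \<open>b\<close> meet in no or in two
  points, while circles with equal \<open>b\<close> meet in at most one point. So tangency to \<open>M\<close> forces
  \<open>K\<close> and \<open>L\<close> to share the coefficient \<open>b\<close> of \<open>M\<close>, and sharing \<open>p\<close> they touch there.\<close>

lemma tangent_at_image_iff:
  assumes "inj_on f A" and "K \<subseteq> A" and "L \<subseteq> A" and "p \<in> A"
  shows "tangent_at (f ` K) (f ` L) (f p) \<longleftrightarrow> tangent_at K L p"
proof -
  have "f ` K \<inter> f ` L = f ` (K \<inter> L)"
    using assms(1-3) by (simp add: inj_on_image_Int)
  moreover have "f ` (K \<inter> L) = f ` {p} \<longleftrightarrow> K \<inter> L = {p}"
    using assms by (intro inj_on_image_eq_iff) auto
  moreover have "f ` K = f ` L \<longleftrightarrow> K = L"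
    using assms by (intro inj_on_image_eq_iff) auto
  moreover have "f p \<in> f ` K \<longleftrightarrow> p \<in> K" "f p \<in> f ` L \<longleftrightarrow> p \<in> L"
    using assms by (simp_all add: inj_on_image_mem_iff)
  ultimately show ?thesis
    unfolding tangent_at_def by auto
qed

lemma tangent_image:
  assumes "inj_on f A" and "K \<subseteq> A" and "L \<subseteq> A" and "tangent K L"
  shows "tangent (f ` K) (f ` L)"
proof -
  obtain p where "tangent_at K L p"
    using assms(4) unfolding tangent_def by blast
  moreover have "p \<in> A"
    using calculation assms(2) unfolding tangent_at_def by blast
  ultimately show ?thesis
    using tangent_at_image_iff[OF assms(1-3)] unfolding tangent_def by blast
qed

lemma None_mem_classical_circle_iff [simp]:
  "(None, y) \<in> classical_circle a b c \<longleftrightarrow> y = a"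
  by (simp add: classical_circle_def)

lemma Some_mem_classical_circle_iff [simp]:
  "(Some x, y) \<in> classical_circle a b c \<longleftrightarrow> y = a * x ^ 2 + b * x + c"
  by (auto simp: classical_circle_def)

lemma classical_circle_eq_iff:
  "classical_circle a b c = classical_circle a' b' c' \<longleftrightarrow> a = a' \<and> b = b' \<and> c = c'"
proof
  assume eq: "classical_circle a b c = classical_circle a' b' c'"
  have "(None, a) \<in> classical_circle a' b' c'"
    "(Some 0, c) \<in> classical_circle a' b' c'"
    "(Some 1, a + b + c) \<in> classical_circle a' b' c'"
    unfolding eq[symmetric] by simp_all
  then show "a = a' \<and> b = b' \<and> c = c'"
    by simp
qed simp

lemma square_eq_square_iff_CHAR_2:
  fixes x y :: "'a::idom"
  assumes "CHAR('a) = 2"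
  shows "x ^ 2 = y ^ 2 \<longleftrightarrow> x = y"
proof -
  have "(x - y) ^ 2 = (x + y) ^ 2"
    by (simp only: minus_CHAR_2[OF assms])
  also have "\<dots> = x ^ 2 + y ^ 2"
    by (rule freshmans_dream) (simp_all add: assms)
  also have "\<dots> = x ^ 2 - y ^ 2"
    by (simp only: minus_CHAR_2[OF assms])
  finally have "(x - y) ^ 2 = x ^ 2 - y ^ 2" .
  then show ?thesis
    by (metis eq_iff_diff_eq_0 zero_eq_power2)
qed

text \<open>The two roots of a quadratic sum to \<open>-e/d = e/d\<close>.\<close>

lemma quadratic_other_root_CHAR_2:
  fixes d e f x :: "'a::field"
  assumes "CHAR('a) = 2" and "d \<noteq> 0" and "d * x ^ 2 + e * x + f = 0"
  shows "d * (x + e / d) ^ 2 + e * (x + e / d) + f = 0"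
proof -
  have two: "(2::'a) = 0"
    using of_nat_CHAR[where 'a = 'a] assms(1) by simp
  have "d * (x + e / d) ^ 2 + e * (x + e / d) + f
      = (d * x ^ 2 + e * x + f) + 2 * (e * x) + 2 * (e * e / d)"
    using assms(2) by (simp add: field_simps power2_eq_square)
  also have "\<dots> = 0"
    using assms(3) two by simp
  finally show ?thesis .
qed

lemma classical_circles_Int_cases:
  assumes "q \<in> classical_circle a b c \<inter> classical_circle a' b' c'"
  obtains (infinite) "q = (None, a)" and "a = a'"
    | (finite) x where "q = (Some x, a * x ^ 2 + b * x + c)"
      and "(a - a') * x ^ 2 + (b - b') * x + (c - c') = 0"
proof -
  obtain u y where q: "q = (u, y)"
    by fastforce
  show ?thesis
  proof (cases u)
    case None
    then show ?thesis
      using that(1) assms q by auto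
  next
    case (Some x)
    then have "y = a * x ^ 2 + b * x + c" and "y = a' * x ^ 2 + b' * x + c'"
      using assms q by auto
    then show ?thesis
      using that(2)[of x] q Some by (simp add: algebra_simps)
  qed
qed

lemma classical_circles_meet_twice:
  fixes a b c a' b' c' :: "'f::field"
  assumes "CHAR('f) = 2" and "b \<noteq> b'"
    and "q \<in> classical_circle a b c \<inter> classical_circle a' b' c'"
  shows "\<exists>r \<in> classical_circle a b c \<inter> classical_circle a' b' c'. r \<noteq> q"
proof -
  let ?I = "classical_circle a b c \<inter> classical_circle a' b' c'"
  define d e f where "d = a - a'" and "e = b - b'" and "f = c - c'"
  have e: "e \<noteq> 0"
    using assms(2) by (simp add: e_def)
  have Some_mem: "(Some x, a * x ^ 2 + b * x + c) \<in> ?I" if "d * x ^ 2 + e * x + f = 0" for x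
    using that by (simp add: d_def e_def f_def algebra_simps)
  show ?thesis
  proof (cases "d = 0")
    case True
    have "(None, a) \<in> ?I"
      using True by (simp add: d_def)
    moreover have "(Some (- f / e), a * (- f / e) ^ 2 + b * (- f / e) + c) \<in> ?I"
      using True e by (intro Some_mem) simp
    ultimately show ?thesis
      by (metis option.distinct(1) prod.inject)
  next
    case False
    from assms(3) obtain x where q: "q = (Some x, a * x ^ 2 + b * x + c)"
      and "d * x ^ 2 + e * x + f = 0"
      by (cases rule: classical_circles_Int_cases) (use False in \<open>auto simp: d_def e_def f_def\<close>)
    then have "(Some (x + e / d), a * (x + e / d) ^ 2 + b * (x + e / d) + c) \<in> ?I"
      using quadratic_other_root_CHAR_2[OF assms(1) False] Some_mem by blast
    moreover have "x + e / d \<noteq> x"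
      using False e by simp
    ultimately show ?thesis
      using q by (metis option.inject prod.inject)
  qed
qed

lemma classical_circles_tangent_imp_eq_linear_coeff:
  fixes a b c a' b' c' :: "'f::field"
  assumes "CHAR('f) = 2"
    and "tangent (classical_circle a b c) (classical_circle a' b' c')"
  shows "b = b'"
proof (rule ccontr)
  assume "b \<noteq> b'"
  obtain q where q: "tangent_at (classical_circle a b c) (classical_circle a' b' c') q"
    using assms(2) unfolding tangent_def by blast
  with \<open>b \<noteq> b'\<close> have "classical_circle a b c \<inter> classical_circle a' b' c' = {q}"
    unfolding tangent_at_def by (auto simp: classical_circle_eq_iff)
  moreover have "\<exists>r \<in> classical_circle a b c \<inter> classical_circle a' b' c'. r \<noteq> q"
    using classical_circles_meet_twice[OF assms(1) \<open>b \<noteq> b'\<close>] q unfolding tangent_at_def by blast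
  ultimately show False
    by blast
qed

lemma classical_circles_eq_linear_coeff_tangent_at:
  fixes a b c a' c' :: "'f::field"
  assumes "CHAR('f) = 2"
    and "q \<in> classical_circle a b c" and "q \<in> classical_circle a' b c'"
  shows "tangent_at (classical_circle a b c) (classical_circle a' b c') q"
proof (cases "a = a' \<and> c = c'")
  case True
  then show ?thesis
    using assms unfolding tangent_at_def by simp
next
  case different: False
  let ?I = "classical_circle a b c \<inter> classical_circle a' b c'"
  have "r = q" if r: "r \<in> ?I" for r
  proof (cases "a = a'")
    case True
    have "s = (None, a)" if "s \<in> ?I" for s
      using that by (cases rule: classical_circles_Int_cases) (use True different in auto)
    then show ?thesis
      using r assms(2,3) by blast
  next
    case False
    have "\<exists>x. s = (Some x, a * x ^ 2 + b * x + c) \<and> x ^ 2 = (c' - c) / (a - a')"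
      if "s \<in> ?I" for s
      using that by (cases rule: classical_circles_Int_cases) (use False in \<open>auto simp: field_simps\<close>)
    then obtain x w where "r = (Some x, a * x ^ 2 + b * x + c)" "q = (Some w, a * w ^ 2 + b * w + c)"
      and "x ^ 2 = w ^ 2"
      using r assms(2,3) by (metis IntI)
    then show ?thesis
      using square_eq_square_iff_CHAR_2[OF assms(1)] by simp
  qed
  then have "?I = {q}"
    using assms(2,3) by blast
  then show ?thesis
    using assms(2,3) unfolding tangent_at_def by blast
qed

theorem proposition1p1:
  fixes P :: "'p set" and C :: "'p set set" and par :: "'p \<Rightarrow> 'p \<Rightarrow> bool"
    and \<phi> :: "'p \<Rightarrow> 'f::field option \<times> 'f"
    and K L M :: "'p set" and p :: 'p
  assumes "laguerre_plane P C par"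
    and "miquelian P C par"
    and "classical_iso P C par \<phi>"
    and "CHAR('f) = 2"
    and "K \<in> C" and "L \<in> C" and "M \<in> C"
    and "p \<in> K" and "p \<in> L"
    and "tangent K M" and "tangent L M"
  shows "tangent_at K L p"
proof -
  have sub: "K \<subseteq> P" "L \<subseteq> P" "M \<subseteq> P"
    using assms(1,5-7) unfolding laguerre_plane_def by auto
  have inj: "inj_on \<phi> P"
    and circles: "\<And>N. N \<subseteq> P \<Longrightarrow> N \<in> C \<longleftrightarrow> \<phi> ` N \<in> classical_circles"
    using assms(3) unfolding classical_iso_def bij_betw_def by auto
  have circle: "\<exists>a b c. \<phi> ` N = classical_circle a b c" if "N \<in> C" "N \<subseteq> P" for N
    using circles[OF that(2)] that(1) unfolding classical_circles_def by blast
  obtain a1 b1 c1 where K: "\<phi> ` K = classical_circle a1 b1 c1"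
    using circle[OF assms(5) sub(1)] by blast
  obtain a2 b2 c2 where L: "\<phi> ` L = classical_circle a2 b2 c2"
    using circle[OF assms(6) sub(2)] by blast
  obtain a3 b3 c3 where M: "\<phi> ` M = classical_circle a3 b3 c3"
    using circle[OF assms(7) sub(3)] by blast
  have "b1 = b3"
    using tangent_image[OF inj sub(1,3) assms(10)] K M
    by (simp add: classical_circles_tangent_imp_eq_linear_coeff[OF assms(4)])
  moreover have "b2 = b3"
    using tangent_image[OF inj sub(2,3) assms(11)] L M
    by (simp add: classical_circles_tangent_imp_eq_linear_coeff[OF assms(4)])
  moreover have "\<phi> p \<in> \<phi> ` K" and "\<phi> p \<in> \<phi> ` L"
    using assms(8,9) by simp_all
  ultimately have "tangent_at (\<phi> ` K) (\<phi> ` L) (\<phi> p)"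
    using classical_circles_eq_linear_coeff_tangent_at[OF assms(4)] K L by simp
  then show ?thesis
    using tangent_at_image_iff[OF inj sub(1,2)] sub(1) assms(8) by blast
qed

end
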